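(* Let $\mathfrak N=\mathcal V\oplus\mathfrak Z$ be a two-step nilpotent Lie algebra of type $(p,q)$ with $[\mathfrak N,\mathfrak N]=\mathfrak Z$ equal to the center. Let $C=(C_1,\dots,C_p)\in\mathfrak{so}(q)^p$ be its structure matrices with respect to some adapted basis, viewed as linear maps $\mathbb R^q\to\mathbb R^q$. Then $\mathfrak N$ is a direct sum of two nonzero ideals if and only if there is a basis $\{A_1,\dots,A_l\}\cup\{B_1,\dots,B_k\}$ of $\mathrm{span}\{C_1,\dots,C_p\}\subset\mathfrak{so}(q)$ such that $\mathbb R^q=\mathcal V_1\oplus\mathcal V_2$, where $\mathcal V_2=\bigcap_{i=1}^l\ker A_i$ and $\mathcal V_1=\bigcap_{i=1}^k\ker B_i$.
   Context: A two-step nilpotent Lie algebra $\mathfrak N$ has type $(p,q)$ if $\dim[\mathfrak N,\mathfrak N]=p$ and the codimension is $q$. An adapted basis is a basis $\{v_1,\dots,v_q,Z_1,\dots,Z_p\}$ of $\mathfrak N$ where $\{Z_k\}$ is a basis of $[\mathfrak N,\mathfrak N]$. The structure matrices $C_k\in\mathfrak{so}(q)$ (real skew-symmetric $q\times q$ matrices) are defined by $[v_i,v_j]=\sum_k(C_k)_{ij}Z_k$. We identify $\mathcal V=\mathrm{span}\{v_i\}$ with $\mathbb R^q$. *)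

theory Defs
  imports "HOL-Analysis.Analysis"
begin

text \<open>Two-step nilpotent Lie algebra N = V + Z modelled on real^'q \<times> real^'p,
  with the adapted basis being the standard bases of real^'q (the v_i) and real^'p (the Z_k).
  The structure matrices C k give [v_i, v_j] = sum_k (C_k)_ij Z_k.\<close>

definition nbr :: "('p::finite \<Rightarrow> real^'q::finite^'q) \<Rightarrow> ((real^'q) \<times> (real^'p)) \<Rightarrow> ((real^'q) \<times> (real^'p)) \<Rightarrow> ((real^'q) \<times> (real^'p))"
  where "nbr C x y = (0, (\<chi> k. fst x \<bullet> (C k *v fst y)))"

definition derived_alg :: "('p::finite \<Rightarrow> real^'q::finite^'q) \<Rightarrow> ((real^'q) \<times> (real^'p)) set"
  where "derived_alg C = span {nbr C x y | x y. True}"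

definition center_alg :: "('p::finite \<Rightarrow> real^'q::finite^'q) \<Rightarrow> ((real^'q) \<times> (real^'p)) set"
  where "center_alg C = {x. \<forall>y. nbr C x y = 0}"

definition is_ideal :: "('p::finite \<Rightarrow> real^'q::finite^'q) \<Rightarrow> ((real^'q) \<times> (real^'p)) set \<Rightarrow> bool"
  where "is_ideal C I \<longleftrightarrow> subspace I \<and> (\<forall>x\<in>I. \<forall>y. nbr C y x \<in> I)"

definition decomposable :: "('p::finite \<Rightarrow> real^'q::finite^'q) \<Rightarrow> bool"
  where "decomposable C \<longleftrightarrow> (\<exists>I J. is_ideal C I \<and> is_ideal C J \<and> I \<noteq> {0} \<and> J \<noteq> {0}
            \<and> I \<inter> J = {0} \<and> {a + b | a b. a \<in> I \<and> b \<in> J} = UNIV)"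

definition mker :: "real^'q^'q \<Rightarrow> (real^'q) set"
  where "mker A = {v. A *v v = 0}"

end

theory Submission
  imports Defs
begin

(*
  The bracket restricted to V is br u v = (u . C_k v)_k, and a vector m in Z corresponds to
  the matrix comb m = sum_k m_k C_k with  m . br x y = x . (comb m y).  Since the brackets
  span Z, comb is a linear isomorphism from Z onto span{C_k}.

  Both sides of the theorem are shown equivalent to the existence of a "bracket split":
  complementary subspaces V = V1 + V2 and Z = Z1 + Z2 with [V1,V2] = 0 and [Vi,Vi] in Zi.
    * A split gives the ideals V1 x Z1 and V2 x Z2; conversely two complementary ideals
      I, J give the split by projection to V and intersection with Z.
    * From a split, the annihilators Z2^perp and Z1^perp are complementary; the images of
      bases of them under comb are the matrices A_i and B_j, whose common kernels are V2 and V1.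
    * From matrices A_i, B_j, the common kernels V2, V1 commute (skew-symmetry), and
      Z_i = span [Vi,Vi] are complementary because comb is injective.
*)

section \<open>Complementary subspaces\<close>

definition complementary :: "'a::real_vector set \<Rightarrow> 'a set \<Rightarrow> bool"
  where "complementary U W \<longleftrightarrow> U \<inter> W = {0} \<and> U + W = UNIV"

lemma set_plus_eq_sums: "U + W = {a + b | a b. a \<in> U \<and> b \<in> W}"
  by (auto simp: set_plus_def)

lemma subspace_set_plus: "subspace U \<Longrightarrow> subspace W \<Longrightarrow> subspace (U + W)"
  unfolding set_plus_eq_sums by (rule subspace_sums)

lemma complementary_sym: "complementary U W \<Longrightarrow> complementary W U"
  unfolding complementary_def by (metis Int_commute add.commute)

lemma complementary_decomp:
  assumes "complementary U W"
  obtains a b where "a \<in> U" "b \<in> W" "x = a + b"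
proof -
  have "x \<in> U + W" using assms by (simp add: complementary_def)
  then obtain a b where "x = a + b" "a \<in> U" "b \<in> W" by (rule set_plus_elim)
  then show thesis by (intro that)
qed

text \<open>Orthogonal complements of complementary subspaces are again complementary:
  the sum of the complements has trivial complement, hence is everything.\<close>

lemma complementary_orthogonal_comp:
  fixes U W :: "'a::euclidean_space set"
  assumes subU: "subspace U" and subW: "subspace W" and comp: "complementary U W"
  shows "complementary (U\<^sup>\<bottom>) (W\<^sup>\<bottom>)"
  unfolding complementary_def
proof
  show "U\<^sup>\<bottom> \<inter> W\<^sup>\<bottom> = {0}"
  proof (intro subset_antisym subsetI)
    fix x assume x: "x \<in> U\<^sup>\<bottom> \<inter> W\<^sup>\<bottom>"
    obtain a b where "a \<in> U" "b \<in> W" "x = a + b" using comp by (rule complementary_decomp)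
    then have "x \<bullet> x = 0"
      using x by (simp add: orthogonal_comp_def orthogonal_def inner_add_left)
    then show "x \<in> {0}" by simp
  qed (simp add: subspace_0 subspace_orthogonal_comp)
  define S where "S = U\<^sup>\<bottom> + W\<^sup>\<bottom>"
  have subS: "subspace S"
    unfolding S_def by (intro subspace_set_plus subspace_orthogonal_comp)
  have "U\<^sup>\<bottom> \<subseteq> S"
  proof
    fix x assume "x \<in> U\<^sup>\<bottom>"
    then have "x + 0 \<in> S"
      unfolding S_def by (intro set_plus_intro subspace_0 subspace_orthogonal_comp)
    then show "x \<in> S" by simp
  qed
  moreover have "W\<^sup>\<bottom> \<subseteq> S"
  proof
    fix x assume "x \<in> W\<^sup>\<bottom>"
    then have "0 + x \<in> S"
      unfolding S_def by (intro set_plus_intro subspace_0 subspace_orthogonal_comp)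
    then show "x \<in> S" by simp
  qed
  ultimately have "S\<^sup>\<bottom> \<subseteq> U\<^sup>\<bottom>\<^sup>\<bottom> \<inter> W\<^sup>\<bottom>\<^sup>\<bottom>"
    using orthogonal_comp_anti_mono by blast
  then have "S\<^sup>\<bottom> \<subseteq> U \<inter> W"
    by (simp only: orthogonal_comp_self[OF subU] orthogonal_comp_self[OF subW])
  then have "S\<^sup>\<bottom> = {0}"
    using comp subspace_0[OF subspace_orthogonal_comp] by (auto simp: complementary_def)
  then have "S = UNIV"
    using orthogonal_comp_self[OF subS] orthogonal_comp_null by metis
  then show "U\<^sup>\<bottom> + W\<^sup>\<bottom> = UNIV"
    by (simp only: S_def)
qed

text \<open>If Z1 is nontrivial, its complement Z2 is proper, so Z2 has a nonzero annihilator.\<close>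

lemma complementary_orthogonal_comp_nonzero:
  fixes Z1 Z2 :: "'a::euclidean_space set"
  assumes "subspace Z2" "complementary Z1 Z2" "Z1 \<noteq> {0}"
  shows "Z2\<^sup>\<bottom> \<noteq> {0}"
proof
  assume "Z2\<^sup>\<bottom> = {0}"
  then have "Z2 = UNIV" using orthogonal_comp_self[OF assms(1)] orthogonal_comp_null by metis
  then show False using assms(2,3) by (simp add: complementary_def)
qed

lemma complementary_bases:
  fixes U W :: "'a::euclidean_space set"
  assumes subU: "subspace U" and subW: "subspace W" and comp: "complementary U W"
  obtains BU BW where "BU \<subseteq> U" "U \<subseteq> span BU" "BW \<subseteq> W" "W \<subseteq> span BW"
    "finite BU" "finite BW" "BU \<inter> BW = {}" "independent (BU \<union> BW)" "span (BU \<union> BW) = UNIV"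
proof -
  obtain BU where BU: "BU \<subseteq> U" "independent BU" "U \<subseteq> span BU" "card BU = dim U"
    using basis_exists by blast
  obtain BW where BW: "BW \<subseteq> W" "independent BW" "W \<subseteq> span BW" "card BW = dim W"
    using basis_exists by blast
  have fin: "finite BU" "finite BW" using BU(2) BW(2) by (simp_all add: finiteI_independent)
  have disj: "BU \<inter> BW = {}"
  proof (rule ccontr)
    assume "BU \<inter> BW \<noteq> {}"
    then obtain x where x: "x \<in> BU" "x \<in> BW" by blast
    then have "x \<in> U \<inter> W" using BU(1) BW(1) by blast
    then have "x = 0" using comp unfolding complementary_def by blast
    then show False using x(1) BU(2) dependent_zero by blast
  qed
  have span_all: "span (BU \<union> BW) = UNIV"
  proof -
    have "x \<in> span (BU \<union> BW)" for x
    proof -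
      obtain a b where "a \<in> U" "b \<in> W" "x = a + b" using comp by (rule complementary_decomp)
      moreover have "a \<in> span (BU \<union> BW)" "b \<in> span (BU \<union> BW)"
        using \<open>a \<in> U\<close> \<open>b \<in> W\<close> BU(3) BW(3) span_mono[of BU "BU \<union> BW"] span_mono[of BW "BU \<union> BW"]
        by blast+
      ultimately show ?thesis by (simp add: span_add)
    qed
    then show ?thesis by blast
  qed
  have "dim (U + W) + dim (U \<inter> W) = dim U + dim W"
    using dim_sums_Int[OF subU subW] by (simp only: set_plus_eq_sums)
  then have "card (BU \<union> BW) = dim (UNIV :: 'a set)"
    using comp BU(4) BW(4) card_Un_disjoint[OF fin disj] by (simp add: complementary_def)
  then have "independent (BU \<union> BW)"
    using card_eq_dim[of "BU \<union> BW" UNIV] fin span_all by simp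
  then show thesis using that BU BW fin disj span_all by blast
qed

section \<open>Brackets and structure matrices\<close>

definition br :: "('p::finite \<Rightarrow> real^'q::finite^'q) \<Rightarrow> real^'q \<Rightarrow> real^'q \<Rightarrow> real^'p"
  where "br C u v = (\<chi> k. u \<bullet> (C k *v v))"

definition comb :: "('p::finite \<Rightarrow> real^'q::finite^'q) \<Rightarrow> real^'p \<Rightarrow> real^'q^'q"
  where "comb C m = (\<Sum>k\<in>UNIV. m$k *\<^sub>R C k)"

lemma nbr_eq: "nbr C x y = (0, br C (fst x) (fst y))"
  by (simp add: nbr_def br_def)

lemma br_add_left: "br C (a + b) v = br C a v + br C b v"
  by (simp add: br_def vec_eq_iff inner_add_left)

lemma br_add_right: "br C v (a + b) = br C v a + br C v b"
  by (simp add: br_def vec_eq_iff inner_add_right matrix_vector_right_distrib)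

lemma br_eq_0_iff: "br C u v = 0 \<longleftrightarrow> (\<forall>k. u \<bullet> (C k *v v) = 0)"
  by (simp add: br_def vec_eq_iff)

lemma comb_mult: "comb C m *v y = (\<Sum>k\<in>UNIV. m$k *\<^sub>R (C k *v y))"
  unfolding comb_def
  by (simp add: vec_eq_iff matrix_vector_mult_def sum_distrib_left algebra_simps)
     (rule allI, rule sum.swap)

lemma comb_inner: "m \<bullet> br C x y = x \<bullet> (comb C m *v y)"
  by (simp add: comb_mult inner_vec_def br_def inner_sum_right sum_distrib_left mult_ac)
     (rule sum.swap)

lemma linear_comb: "linear (comb C)"
  by (rule linearI) (simp_all add: comb_def sum.distrib scaleR_add_left scaleR_sum_right)

lemma comb_axis: "comb C (axis k 1) = C k"
proof -
  have "comb C (axis k 1) = (\<Sum>j\<in>UNIV. (if j = k then C j else 0))"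
    unfolding comb_def by (rule sum.cong) (auto simp: axis_def)
  also have "\<dots> = C k" by (simp add: sum.delta)
  finally show ?thesis .
qed

lemma range_comb: "range (comb C) = span (range C)"
proof
  show "range (comb C) \<subseteq> span (range C)"
  proof
    fix M assume "M \<in> range (comb C)"
    then obtain m where "M = comb C m" by blast
    then show "M \<in> span (range C)"
      unfolding comb_def by (simp add: span_sum span_mul span_base)
  qed
  have "range C \<subseteq> range (comb C)" by (metis comb_axis image_subsetI rangeI)
  moreover have "subspace (range (comb C))"
    by (rule linear_subspace_image[OF linear_comb subspace_UNIV])
  ultimately show "span (range C) \<subseteq> range (comb C)" by (rule span_minimal)
qed

lemma skew_inner:
  assumes "transpose A = - (A::real^'q::finite^'q)"
  shows "u \<bullet> (A *v v) = - (v \<bullet> (A *v u))"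
proof -
  have "u \<bullet> (A *v v) = (u v* A) \<bullet> v" by (simp only: dot_lmul_matrix)
  also have "u v* A = transpose A *v u" by (simp only: transpose_matrix_vector)
  also have "\<dots> = - (A *v u)" by (simp add: assms matrix_vector_mult_def vec_eq_iff sum_negf)
  finally show ?thesis by (metis inner_commute inner_minus_left)
qed

lemma br_antisym:
  assumes "\<And>k. transpose (C k) = - C k"
  shows "br C u v = - br C v u"
proof -
  have "u \<bullet> (C k *v v) = - (v \<bullet> (C k *v u))" for k by (rule skew_inner[OF assms])
  then show ?thesis by (simp add: br_def vec_eq_iff)
qed

lemma comb_skew:
  assumes "\<And>k. transpose (C k) = - C k"
  shows "x \<bullet> (comb C m *v y) = - (y \<bullet> (comb C m *v x))"
proof -
  have "x \<bullet> (comb C m *v y) = m \<bullet> (- br C y x)"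
    by (simp only: comb_inner[symmetric] br_antisym[OF assms, where u=x and v=y])
  then show ?thesis by (simp add: comb_inner)
qed

lemma subspace_Times: "subspace A \<Longrightarrow> subspace B \<Longrightarrow> subspace (A \<times> B)"
  unfolding subspace_def by (auto simp: zero_prod_def)

section \<open>Bracket splits\<close>

definition bracket_split ::
  "('p::finite \<Rightarrow> real^'q::finite^'q) \<Rightarrow> (real^'q) set \<Rightarrow> (real^'q) set
     \<Rightarrow> (real^'p) set \<Rightarrow> (real^'p) set \<Rightarrow> bool"
  where "bracket_split C V1 V2 Z1 Z2 \<longleftrightarrow>
    subspace V1 \<and> subspace V2 \<and> subspace Z1 \<and> subspace Z2
    \<and> complementary V1 V2 \<and> complementary Z1 Z2
    \<and> (\<forall>u\<in>V1. \<forall>v\<in>V2. br C u v = 0 \<and> br C v u = 0)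
    \<and> (\<forall>u\<in>V1. \<forall>v\<in>V1. br C u v \<in> Z1) \<and> (\<forall>u\<in>V2. \<forall>v\<in>V2. br C u v \<in> Z2)"

lemma bracket_split_sym:
  assumes "bracket_split C V1 V2 Z1 Z2"
  shows "bracket_split C V2 V1 Z2 Z1"
  using assms complementary_sym[of V1 V2] complementary_sym[of Z1 Z2]
  unfolding bracket_split_def by blast

text \<open>Each block V_i x Z_i of a split is an ideal, since brackets with the other block vanish.\<close>

lemma ideal_of_split:
  fixes C :: "'p::finite \<Rightarrow> real^'q::finite^'q"
  assumes split: "bracket_split C V1 V2 Z1 Z2"
  shows "is_ideal C (V1 \<times> Z1)"
  unfolding is_ideal_def
proof (intro conjI ballI allI)
  show "subspace (V1 \<times> Z1)" using split by (simp add: bracket_split_def subspace_Times)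
next
  fix x and y :: "(real^'q) \<times> (real^'p)"
  assume x: "x \<in> V1 \<times> Z1"
  obtain a b where ab: "a \<in> V1" "b \<in> V2" "fst y = a + b"
    using split unfolding bracket_split_def by (meson complementary_decomp)
  have "br C (fst y) (fst x) = br C a (fst x)"
    using split ab x by (auto simp: bracket_split_def br_add_left)
  then have "br C (fst y) (fst x) \<in> Z1"
    using split ab x by (auto simp: bracket_split_def)
  moreover have "0 \<in> V1" using split by (simp add: bracket_split_def subspace_0)
  ultimately show "nbr C y x \<in> V1 \<times> Z1" by (simp add: nbr_eq)
qed

lemma decomposable_of_split:
  fixes C :: "'p::finite \<Rightarrow> real^'q::finite^'q"
  assumes split: "bracket_split C V1 V2 Z1 Z2" and ne: "V1 \<noteq> {0}" "V2 \<noteq> {0}"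
  shows "decomposable C"
proof -
  have sub: "subspace V1" "subspace V2" "subspace Z1" "subspace Z2"
    and compV: "complementary V1 V2" and compZ: "complementary Z1 Z2"
    using split by (simp_all add: bracket_split_def)
  have nonzero: "V \<times> Z \<noteq> {0}" if ne: "V \<noteq> {0}" and sV: "subspace V" and sZ: "subspace Z"
    for V :: "(real^'q) set" and Z :: "(real^'p) set"
  proof -
    obtain v where "v \<in> V" "v \<noteq> 0" using ne subspace_0[OF sV] by blast
    then have "(v, 0) \<in> V \<times> Z" "(v, 0) \<noteq> 0" using subspace_0[OF sZ] by (auto simp: zero_prod_def)
    then show ?thesis by blast
  qed
  have "(V1 \<times> Z1) \<inter> (V2 \<times> Z2) = {0}"
    using compV compZ by (auto simp: complementary_def zero_prod_def)
  moreover have "{a + b | a b. a \<in> V1 \<times> Z1 \<and> b \<in> V2 \<times> Z2} = UNIV"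
  proof -
    have "x \<in> {a + b | a b. a \<in> V1 \<times> Z1 \<and> b \<in> V2 \<times> Z2}" for x
    proof -
      obtain a b where "a \<in> V1" "b \<in> V2" "fst x = a + b" using compV by (rule complementary_decomp)
      moreover obtain c d where "c \<in> Z1" "d \<in> Z2" "snd x = c + d" using compZ by (rule complementary_decomp)
      ultimately have "x = (a, c) + (b, d) \<and> (a, c) \<in> V1 \<times> Z1 \<and> (b, d) \<in> V2 \<times> Z2"
        by (simp add: prod_eq_iff)
      then show ?thesis by blast
    qed
    then show ?thesis by blast
  qed
  ultimately show ?thesis
    unfolding decomposable_def
    using ideal_of_split[OF split] ideal_of_split[OF bracket_split_sym[OF split]]
      nonzero[OF ne(1) sub(1) sub(3)] nonzero[OF ne(2) sub(2) sub(4)]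
    by blast
qed

lemma ideal_parts:
  fixes C :: "'p::finite \<Rightarrow> real^'q::finite^'q"
  assumes "is_ideal C I"
  shows "subspace (fst ` I)" "subspace (Pair 0 -` I)"
    and "\<And>u v. u \<in> fst ` I \<Longrightarrow> v \<in> fst ` I \<Longrightarrow> br C u v \<in> Pair 0 -` I"
proof -
  have sub: "subspace I" using assms by (simp add: is_ideal_def)
  show "subspace (fst ` I)" by (rule linear_subspace_image[OF linear_fst sub])
  have "linear (Pair (0 :: real^'q) :: real^'p \<Rightarrow> _)" by (rule linearI) simp_all
  then show "subspace (Pair 0 -` I)" by (rule linear_subspace_vimage[OF _ sub])
  fix u v assume "u \<in> fst ` I" "v \<in> fst ` I"
  then obtain a b where "a \<in> I" "b \<in> I" "u = fst a" "v = fst b" by blast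
  moreover have "nbr C a b \<in> I" using assms \<open>b \<in> I\<close> unfolding is_ideal_def by blast
  ultimately show "br C u v \<in> Pair 0 -` I" by (simp add: nbr_eq)
qed

section \<open>Common kernels and splitting bases\<close>

definition common_kernel :: "(real^'q::finite^'q) list \<Rightarrow> (real^'q) set"
  where "common_kernel Ms = (\<Inter>M\<in>set Ms. mker M)"

lemma subspace_common_kernel: "subspace (common_kernel Ms)"
proof -
  have "subspace (mker M)" for M :: "real^'q::finite^'q"
    unfolding subspace_def mker_def by (simp add: matrix_vector_right_distrib matrix_vector_mult_scaleR)
  then show ?thesis unfolding common_kernel_def by (intro subspace_Inter) blast
qed

lemma span_kills:
  fixes M :: "real^'q::finite^'q"
  assumes "M \<in> span (set Ms)" "v \<in> common_kernel Ms"
  shows "M *v v = 0"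
proof -
  have "subspace {M :: real^'q::finite^'q. M *v v = 0}"
    unfolding subspace_def by (simp add: matrix_vector_mult_add_rdistrib flip: scaleR_matrix_vector_assoc)
  moreover have "set Ms \<subseteq> {M. M *v v = 0}" using assms(2) by (auto simp: common_kernel_def mker_def)
  ultimately have "span (set Ms) \<subseteq> {M. M *v v = 0}" by (intro span_minimal)
  then show ?thesis using assms(1) by blast
qed

text \<open>If U is complementary to the common kernel of a nonempty list of nonzero matrices, then
  U is nontrivial (otherwise some matrix would vanish identically).\<close>

lemma common_kernel_nonzero:
  assumes "As \<noteq> []" "0 \<notin> set As" "complementary U (common_kernel As)"
  shows "U \<noteq> {0}"
proof
  assume "U = {0}"
  then have "x \<in> common_kernel As" for x
    using assms(3) by (metis complementary_decomp add_0 singletonD)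
  then have "hd As *v x = 0" for x using assms(1) by (simp add: common_kernel_def mker_def)
  then have "hd As = 0" by (simp add: matrix_eq)
  then show False using assms(1,2) by (metis hd_in_set)
qed

definition bracket_span :: "('p::finite \<Rightarrow> real^'q::finite^'q) \<Rightarrow> (real^'q) set \<Rightarrow> (real^'p) set"
  where "bracket_span C V = span {br C u v | u v. u \<in> V \<and> v \<in> V}"

lemma annihilator_of_kills:
  assumes "\<And>v. v \<in> V \<Longrightarrow> comb C m *v v = 0"
  shows "m \<in> (bracket_span C V)\<^sup>\<bottom>"
proof -
  have "{br C u v | u v. u \<in> V \<and> v \<in> V} \<subseteq> {m}\<^sup>\<bottom>"
    using assms by (auto simp: orthogonal_comp_def orthogonal_def comb_inner)
  then have "bracket_span C V \<subseteq> {m}\<^sup>\<bottom>"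
    unfolding bracket_span_def by (rule span_minimal[OF _ subspace_orthogonal_comp])
  then show ?thesis by (auto simp: orthogonal_comp_def orthogonal_def inner_commute)
qed

definition splitting_basis ::
  "('p::finite \<Rightarrow> real^'q::finite^'q) \<Rightarrow> (real^'q^'q) list \<Rightarrow> (real^'q^'q) list \<Rightarrow> bool"
  where "splitting_basis C As Bs \<longleftrightarrow>
    As \<noteq> [] \<and> Bs \<noteq> [] \<and> distinct (As @ Bs) \<and> independent (set (As @ Bs))
    \<and> span (set (As @ Bs)) = span (range C)
    \<and> complementary (common_kernel Bs) (common_kernel As)"

locale nilpotent_center =
  fixes C :: "'p::finite \<Rightarrow> real^'q::finite^'q"
  assumes skew: "\<And>k. transpose (C k) = - C k"
    and derived: "derived_alg C = {0} \<times> UNIV"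
    and center: "center_alg C = {0} \<times> UNIV"
begin

lemma bracket_antisym: "br C u v = - br C v u"
  by (rule br_antisym[where C=C, OF skew])

lemma central: assumes "\<And>y. br C u y = 0" shows "u = 0"
proof -
  have "(u, 0) \<in> center_alg C" using assms by (simp add: center_alg_def nbr_eq zero_prod_def)
  then show ?thesis using center by simp
qed

lemma span_brackets: "span {br C u v | u v. True} = UNIV"
proof -
  let ?S = "{nbr C x y | x y. True}" and ?B = "{br C u v | u v. True}"
  have "snd ` ?S = ?B"
  proof
    show "snd ` ?S \<subseteq> ?B" by (auto simp: nbr_eq) blast
    show "?B \<subseteq> snd ` ?S"
    proof
      fix z assume "z \<in> ?B"
      then obtain u v where "z = br C u v" by blast
      then have "z = snd (nbr C (u, 0) (v, 0))" by (simp add: nbr_eq)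
      then show "z \<in> snd ` ?S" by blast
    qed
  qed
  moreover have "span (snd ` ?S) = snd ` span ?S" by (rule span_linear_image[OF linear_snd])
  moreover have "span ?S = {0} \<times> UNIV" using derived by (simp only: derived_alg_def)
  then have "snd ` span ?S = UNIV" by force
  ultimately show ?thesis by simp
qed

text \<open>Since the brackets span Z, the map m to comb m is injective.\<close>

lemma comb_inj: "inj (comb C)"
  unfolding linear_inj_iff_eq_0[OF linear_comb]
proof (intro allI impI)
  fix m assume m: "comb C m = 0"
  have "{br C u v | u v. True} \<subseteq> {z. m \<bullet> z = 0}" by (auto simp: comb_inner m)
  then have "span {br C u v | u v. True} \<subseteq> {z. m \<bullet> z = 0}"
    by (rule span_minimal) (simp add: subspace_def inner_add_right)
  then have "m \<bullet> m = 0" using span_brackets by blast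
  then show "m = 0" by simp
qed

lemma skew_span: assumes "M \<in> span (range C)" shows "x \<bullet> (M *v y) = - (y \<bullet> (M *v x))"
proof -
  have "M \<in> range (comb C)" using assms by (simp only: range_comb)
  then obtain m where "M = comb C m" by blast
  then show ?thesis using comb_skew[where C=C, OF skew] by blast
qed

text \<open>In a split, a nonzero V1 has nonzero Z1: otherwise V1 would be central.\<close>

lemma split_center_nonzero:
  assumes split: "bracket_split C V1 V2 Z1 Z2" and ne: "V1 \<noteq> {0}"
  shows "Z1 \<noteq> {0}"
proof
  assume Z1: "Z1 = {0}"
  have "u = 0" if u: "u \<in> V1" for u
  proof (rule central)
    fix y
    obtain y1 y2 where y: "y1 \<in> V1" "y2 \<in> V2" "y = y1 + y2"
      using split unfolding bracket_split_def by (meson complementary_decomp)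
    have "br C u y = br C u y1 + br C u y2" by (simp add: y(3) br_add_right)
    also have "br C u y1 = 0" using split u y(1) Z1 by (auto simp: bracket_split_def)
    also have "br C u y2 = 0" using split u y(2) by (simp add: bracket_split_def)
    finally show "br C u y = 0" by simp
  qed
  then show False using ne split by (auto simp: bracket_split_def subspace_0)
qed

text \<open>In a split, a nonzero Z1 has nonzero V1: otherwise all brackets would lie in Z2.\<close>

lemma split_derived_nonzero:
  assumes split: "bracket_split C V1 V2 Z1 Z2" and ne: "Z1 \<noteq> {0}"
  shows "V1 \<noteq> {0}"
proof
  assume V1: "V1 = {0}"
  have compV: "complementary V1 V2" and compZ: "complementary Z1 Z2"
    using split by (simp_all add: bracket_split_def)
  have V2: "v \<in> V2" for v
    using compV V1 by (metis complementary_decomp add_0 singletonD)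
  have "{br C u v | u v. True} \<subseteq> Z2" using split V2 by (auto simp: bracket_split_def)
  then have "span {br C u v | u v. True} \<subseteq> Z2"
    using split by (simp add: bracket_split_def span_minimal)
  then have "Z2 = UNIV" using span_brackets by blast
  then show False using ne compZ by (simp add: complementary_def)
qed

lemma ideals_commute:
  assumes "is_ideal C I" "is_ideal C J" "I \<inter> J = {0}" "a \<in> I" "b \<in> J"
  shows "br C (fst a) (fst b) = 0"
proof -
  have "nbr C b a \<in> I" "nbr C a b \<in> J" using assms unfolding is_ideal_def by blast+
  moreover have "nbr C a b = - nbr C b a" by (simp add: nbr_eq bracket_antisym[of "fst a"])
  ultimately have "nbr C a b \<in> I \<inter> J"
    using assms(1) by (simp add: is_ideal_def subspace_neg)
  then show ?thesis using assms(3) by (simp add: nbr_eq zero_prod_def)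
qed

text \<open>For complementary ideals I, J their projections to V are complementary; the
  intersection is trivial since its elements commute with everything.\<close>

lemma ideal_projections_complementary:
  assumes I: "is_ideal C I" and J: "is_ideal C J" and IJ: "I \<inter> J = {0}" "I + J = UNIV"
  shows "complementary (fst ` I) (fst ` J)"
  unfolding complementary_def
proof
  have decomp: "\<exists>a\<in>I. \<exists>b\<in>J. x = a + b" for x
    using IJ(2) set_plus_elim[of x I J] by blast
  show "fst ` I \<inter> fst ` J = {0}"
  proof (rule subset_antisym)
    show "fst ` I \<inter> fst ` J \<subseteq> {0}"
    proof (intro subsetI, simp only: singleton_iff, rule central)
      fix u y assume u: "u \<in> fst ` I \<inter> fst ` J"
      obtain a b where ab: "a \<in> I" "b \<in> J" "(y, 0) = a + b" using decomp by blast
      then have y: "y = fst a + fst b" by (simp add: prod_eq_iff)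
      obtain a' b' where a': "a' \<in> I" "u = fst a'" and b': "b' \<in> J" "u = fst b'"
        using u by blast
      have "br C (fst a) u = 0" using ideals_commute[OF I J IJ(1) ab(1) b'(1)] b'(2) by simp
      moreover have "br C u (fst b) = 0" using ideals_commute[OF I J IJ(1) a'(1) ab(2)] a'(2) by simp
      ultimately have "br C u (fst a) = 0" "br C u (fst b) = 0" by (simp_all add: bracket_antisym[of u])
      then show "br C u y = 0" by (simp add: y br_add_right)
    qed
  next
    have "0 \<in> I" "0 \<in> J" using I J by (simp_all add: is_ideal_def subspace_0)
    then show "{0} \<subseteq> fst ` I \<inter> fst ` J" by (auto intro!: image_eqI[where x=0])
  qed
  show "fst ` I + fst ` J = UNIV"
  proof (intro subset_antisym subsetI)
    fix v
    obtain a b where "a \<in> I" "b \<in> J" "(v, 0) = a + b" using decomp by blast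
    then have "v = fst a + fst b" "fst a \<in> fst ` I" "fst b \<in> fst ` J" by (auto simp: prod_eq_iff)
    then show "v \<in> fst ` I + fst ` J" by (simp add: set_plus_intro)
  qed simp
qed

lemma ideal_fibres_complementary:
  assumes I: "is_ideal C I" and J: "is_ideal C J" and IJ: "I \<inter> J = {0}" "I + J = UNIV"
  shows "complementary (Pair 0 -` I) (Pair 0 -` J)"
  unfolding complementary_def
proof
  have "0 \<in> I" "0 \<in> J" using I J by (simp_all add: is_ideal_def subspace_0)
  then show "Pair 0 -` I \<inter> Pair 0 -` J = {0}"
    using IJ(1) by (auto simp: zero_prod_def)
  show "Pair 0 -` I + Pair 0 -` J = UNIV"
  proof (intro subset_antisym subsetI)
    fix z
    obtain a b where ab: "a \<in> I" "b \<in> J" "(0, z) = a + b"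
      using IJ(2) set_plus_elim[of "(0, z)" I J] by blast
    then have "fst a = - fst b" by (simp add: prod_eq_iff eq_neg_iff_add_eq_0)
    moreover have "- fst b \<in> fst ` J"
      using ab(2) subspace_neg[OF ideal_parts(1)[OF J]] by blast
    ultimately have "fst a \<in> fst ` I \<inter> fst ` J" using ab(1) by (metis IntI image_eqI)
    then have "fst a = 0"
      using ideal_projections_complementary[OF assms] unfolding complementary_def by blast
    then have "fst b = 0" using \<open>fst a = - fst b\<close> by simp
    then have "snd a \<in> Pair 0 -` I" "snd b \<in> Pair 0 -` J" "z = snd a + snd b"
      using ab \<open>fst a = 0\<close> by (auto simp: prod_eq_iff) (metis prod.collapse)+
    then show "z \<in> Pair 0 -` I + Pair 0 -` J" by (simp add: set_plus_intro)
  qed simp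
qed

lemma split_of_ideals:
  assumes I: "is_ideal C I" and J: "is_ideal C J" and IJ: "I \<inter> J = {0}" "I + J = UNIV"
  shows "bracket_split C (fst ` I) (fst ` J) (Pair 0 -` I) (Pair 0 -` J)"
proof -
  have comm: "br C u w = 0" "br C w u = 0" if "u \<in> fst ` I" "w \<in> fst ` J" for u w
    using that ideals_commute[OF I J IJ(1)] bracket_antisym[of w u] by auto
  show ?thesis
    unfolding bracket_split_def
    by (intro conjI ballI ideal_parts[OF I] ideal_parts[OF J] comm
        ideal_projections_complementary[OF assms] ideal_fibres_complementary[OF assms])
qed

lemma split_of_decomposable:
  assumes "decomposable C"
  obtains V1 V2 Z1 Z2 where "bracket_split C V1 V2 Z1 Z2" "V1 \<noteq> {0}" "V2 \<noteq> {0}"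
proof -
  obtain I J where I: "is_ideal C I" and J: "is_ideal C J" and ne: "I \<noteq> {0}" "J \<noteq> {0}"
    and IJ: "I \<inter> J = {0}" "{a + b | a b. a \<in> I \<and> b \<in> J} = UNIV"
    using assms unfolding decomposable_def by blast
  have split: "bracket_split C (fst ` I) (fst ` J) (Pair 0 -` I) (Pair 0 -` J)"
    using split_of_ideals[OF I J IJ(1)] IJ(2) by (simp add: set_plus_eq_sums)
  have nonzero: "fst ` K \<noteq> {0}"
    if split_K: "bracket_split C (fst ` K) V (Pair 0 -` K) Z" and K: "is_ideal C K" "K \<noteq> {0}"
    for K V Z
  proof -
    have "0 \<in> K" using K(1) by (simp add: is_ideal_def subspace_0)
    then obtain a where a: "a \<in> K" "a \<noteq> 0" using K(2) by blast
    show ?thesis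
    proof (cases "fst a = 0")
      case True
      then have "snd a \<in> Pair 0 -` K" "snd a \<noteq> 0"
        using a by (auto simp: prod_eq_iff) (metis prod.collapse)
      then have "Pair 0 -` K \<noteq> {0}" by blast
      then show ?thesis by (rule split_derived_nonzero[OF split_K])
    next
      case False
      then show ?thesis using a(1) by blast
    qed
  qed
  show thesis
    using that split nonzero[OF split I ne(1)] nonzero[OF bracket_split_sym[OF split] J ne(2)] by blast
qed

lemma annihilator_kills:
  assumes split: "bracket_split C V1 V2 Z1 Z2" and m: "m \<in> Z1\<^sup>\<bottom>" and v: "v \<in> V1"
  shows "comb C m *v v = 0"
proof -
  let ?w = "comb C m *v v"
  obtain w1 w2 where w: "w1 \<in> V1" "w2 \<in> V2" "?w = w1 + w2"
    using split unfolding bracket_split_def by (meson complementary_decomp)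
  have "?w \<bullet> ?w = m \<bullet> br C ?w v" by (simp add: comb_inner)
  also have "br C ?w v = br C w1 v"
    using split w v by (simp add: bracket_split_def br_add_left)
  also have "m \<bullet> br C w1 v = 0"
  proof -
    have "br C w1 v \<in> Z1" using split w(1) v by (simp add: bracket_split_def)
    then have "br C w1 v \<bullet> m = 0" using m unfolding orthogonal_comp_def orthogonal_def by blast
    then show ?thesis by (simp only: inner_commute)
  qed
  finally show ?thesis by simp
qed

lemma common_kernel_of_split:
  assumes split: "bracket_split C V1 V2 Z1 Z2"
    and basis: "BB \<subseteq> Z1\<^sup>\<bottom>" "Z1\<^sup>\<bottom> \<subseteq> span BB"
  shows "(\<Inter>M\<in>comb C ` BB. mker M) = V1"
proof
  show "V1 \<subseteq> (\<Inter>M\<in>comb C ` BB. mker M)"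
    using annihilator_kills[OF split] basis(1) by (auto simp: mker_def)
  show "(\<Inter>M\<in>comb C ` BB. mker M) \<subseteq> V1"
  proof
    fix x assume "x \<in> (\<Inter>M\<in>comb C ` BB. mker M)"
    then have "BB \<subseteq> {m. comb C m *v x = 0}" by (auto simp: mker_def)
    moreover have "subspace {m. comb C m *v x = 0}"
      unfolding subspace_def
      by (simp add: linear_0[OF linear_comb] linear_add[OF linear_comb] linear_scale[OF linear_comb]
          matrix_vector_mult_add_rdistrib flip: scaleR_matrix_vector_assoc)
    ultimately have killx: "comb C m *v x = 0" if "m \<in> Z1\<^sup>\<bottom>" for m
      using basis(2) that span_minimal by blast
    have compW: "complementary (Z1\<^sup>\<bottom>) (Z2\<^sup>\<bottom>)"
      using split by (simp add: bracket_split_def complementary_orthogonal_comp)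
    obtain a b where ab: "a \<in> V1" "b \<in> V2" "x = a + b"
      using split unfolding bracket_split_def by (meson complementary_decomp)
    have killb: "comb C m *v b = 0" for m
    proof -
      obtain m1 m2 where m: "m1 \<in> Z1\<^sup>\<bottom>" "m2 \<in> Z2\<^sup>\<bottom>" "m = m1 + m2"
        using compW by (rule complementary_decomp)
      have "comb C m1 *v b = comb C m1 *v x - comb C m1 *v a"
        by (simp add: ab(3) matrix_vector_right_distrib)
      also have "\<dots> = 0" using killx[OF m(1)] annihilator_kills[OF split m(1) ab(1)] by simp
      finally have "comb C m1 *v b = 0" .
      moreover have "comb C m2 *v b = 0"
        by (rule annihilator_kills[OF bracket_split_sym[OF split] m(2) ab(2)])
      ultimately show ?thesis
        by (simp add: m(3) linear_add[OF linear_comb] matrix_vector_mult_add_rdistrib)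
    qed
    have "br C y b = 0" for y
      using killb[of "axis _ 1"] by (simp add: br_eq_0_iff comb_axis)
    then have "b = 0" by (intro central) (simp add: bracket_antisym[of b])
    then show "x \<in> V1" using ab by simp
  qed
qed

text \<open>A split with nonzero Z-parts yields a splitting basis, obtained from bases of the
  annihilators of Z2 and Z1.\<close>

lemma matrices_of_split:
  assumes split: "bracket_split C V1 V2 Z1 Z2" and ne: "Z1 \<noteq> {0}" "Z2 \<noteq> {0}"
  shows "\<exists>As Bs. splitting_basis C As Bs"
proof -
  have sub: "subspace Z1" "subspace Z2" and compV: "complementary V1 V2"
    and compZ: "complementary Z1 Z2"
    using split by (simp_all add: bracket_split_def)
  have "complementary (Z2\<^sup>\<bottom>) (Z1\<^sup>\<bottom>)"
    by (rule complementary_orthogonal_comp[OF sub(2) sub(1) complementary_sym[OF compZ]])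
  then obtain BA BB where BA: "BA \<subseteq> Z2\<^sup>\<bottom>" "Z2\<^sup>\<bottom> \<subseteq> span BA"
    and BB: "BB \<subseteq> Z1\<^sup>\<bottom>" "Z1\<^sup>\<bottom> \<subseteq> span BB"
    and fin: "finite BA" "finite BB" and disj: "BA \<inter> BB = {}"
    and ind: "independent (BA \<union> BB)" and sp: "span (BA \<union> BB) = UNIV"
    by (rule complementary_bases[OF subspace_orthogonal_comp subspace_orthogonal_comp])
  have "Z2\<^sup>\<bottom> \<noteq> {0}" "Z1\<^sup>\<bottom> \<noteq> {0}"
    using complementary_orthogonal_comp_nonzero[OF sub(2) compZ ne(1)]
      complementary_orthogonal_comp_nonzero[OF sub(1) complementary_sym[OF compZ] ne(2)] .
  then have "BA \<noteq> {}" "BB \<noteq> {}"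
    using BA(2) BB(2) subspace_0[OF subspace_orthogonal_comp] by (auto simp: span_empty)
  obtain la lb where la: "set la = BA" "distinct la" and lb: "set lb = BB" "distinct lb"
    using finite_distinct_list[OF fin(1)] finite_distinct_list[OF fin(2)] by metis
  define As where "As = map (comb C) la"
  define Bs where "Bs = map (comb C) lb"
  have inj: "inj_on (comb C) X" for X by (rule inj_on_subset[OF comb_inj subset_UNIV])
  have setAB: "set (As @ Bs) = comb C ` (BA \<union> BB)"
    by (simp add: As_def Bs_def la lb image_Un)
  have "distinct (As @ Bs)"
    using la lb disj inj unfolding As_def Bs_def by (simp add: distinct_map flip: map_append)
  moreover have "independent (set (As @ Bs))"
    unfolding setAB by (rule linear_independent_injective_image[OF linear_comb ind inj])
  moreover have "span (set (As @ Bs)) = span (range C)"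
    unfolding setAB linear_span_image[OF linear_comb] sp range_comb ..
  moreover have "common_kernel As = V2"
    unfolding common_kernel_def As_def set_map la(1)
    by (rule common_kernel_of_split[OF bracket_split_sym[OF split] BA])
  moreover have "common_kernel Bs = V1"
    unfolding common_kernel_def Bs_def set_map lb(1)
    by (rule common_kernel_of_split[OF split BB])
  moreover have "As \<noteq> []" "Bs \<noteq> []"
    using \<open>BA \<noteq> {}\<close> \<open>BB \<noteq> {}\<close> la(1) lb(1) by (auto simp: As_def Bs_def)
  ultimately show ?thesis
    using compV unfolding splitting_basis_def by blast
qed

lemma kernels_commute:
  assumes sp: "span (set (As @ Bs)) = span (range C)"
    and x: "x \<in> common_kernel As" and y: "y \<in> common_kernel Bs"
  shows "br C x y = 0"
proof -
  have "set (As @ Bs) \<subseteq> {M. x \<bullet> (M *v y) = 0}"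
  proof
    fix M assume M: "M \<in> set (As @ Bs)"
    show "M \<in> {M. x \<bullet> (M *v y) = 0}"
    proof (cases "M \<in> set As")
      case True
      have "M \<in> span (range C)" using M sp span_base by blast
      then have "x \<bullet> (M *v y) = - (y \<bullet> (M *v x))" by (rule skew_span)
      then show ?thesis using x True by (simp add: common_kernel_def mker_def)
    next
      case False
      then show ?thesis using M y by (simp add: common_kernel_def mker_def)
    qed
  qed
  moreover have "subspace {M. x \<bullet> (M *v y) = 0}"
    unfolding subspace_def
    by (simp add: matrix_vector_mult_add_rdistrib inner_add_right flip: scaleR_matrix_vector_assoc)
  ultimately have "span (range C) \<subseteq> {M. x \<bullet> (M *v y) = 0}"
    unfolding sp[symmetric] by (rule span_minimal)
  then show ?thesis by (auto simp: br_eq_0_iff intro: span_base)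
qed

text \<open>The spans [V1,V1] and [V2,V2] of a splitting basis meet only in 0: writing comb z as a
  sum of elements of span As and span Bs splits z into parts orthogonal to each of them.\<close>

lemma bracket_spans_disjoint:
  assumes sp: "span (set (As @ Bs)) = span (range C)"
  shows "bracket_span C (common_kernel Bs) \<inter> bracket_span C (common_kernel As) = {0}"
proof (intro subset_antisym subsetI)
  fix z assume z: "z \<in> bracket_span C (common_kernel Bs) \<inter> bracket_span C (common_kernel As)"
  have "comb C z \<in> span (set As \<union> set Bs)" using sp range_comb[of C] by auto
  then obtain a b where ab: "a \<in> span (set As)" "b \<in> span (set Bs)" "comb C z = a + b"
    unfolding span_Un by blast
  have "span (set As) \<subseteq> range (comb C)" "span (set Bs) \<subseteq> range (comb C)"
    using span_mono[of "set As" "set (As @ Bs)"] span_mono[of "set Bs" "set (As @ Bs)"] sp range_comb[of C]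
    by auto
  then obtain ma mb where ma: "a = comb C ma" and mb: "b = comb C mb" using ab by blast
  have "comb C z = comb C (ma + mb)" by (simp add: ab(3) ma mb linear_add[OF linear_comb])
  then have "z = ma + mb" using comb_inj by (simp add: inj_eq)
  moreover have "ma \<in> (bracket_span C (common_kernel As))\<^sup>\<bottom>"
    using ab(1) ma span_kills by (intro annihilator_of_kills) blast
  moreover have "mb \<in> (bracket_span C (common_kernel Bs))\<^sup>\<bottom>"
    using ab(2) mb span_kills by (intro annihilator_of_kills) blast
  ultimately have "z \<bullet> z = 0"
    using z by (simp add: orthogonal_comp_def orthogonal_def inner_add_right)
  then show "z \<in> {0}" by simp
qed (simp add: bracket_span_def span_zero)

lemma split_of_matrices:
  assumes "splitting_basis C As Bs"
  shows "bracket_split C (common_kernel Bs) (common_kernel As)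
           (bracket_span C (common_kernel Bs)) (bracket_span C (common_kernel As))"
    and "common_kernel Bs \<noteq> {0}" "common_kernel As \<noteq> {0}"
proof -
  let ?V1 = "common_kernel Bs" and ?V2 = "common_kernel As"
  let ?Z1 = "bracket_span C ?V1" and ?Z2 = "bracket_span C ?V2"
  have neA: "As \<noteq> []" and neB: "Bs \<noteq> []" and ind: "independent (set (As @ Bs))"
    and sp: "span (set (As @ Bs)) = span (range C)" and compV: "complementary ?V1 ?V2"
    using assms by (simp_all add: splitting_basis_def)
  have cross: "br C u v = 0 \<and> br C v u = 0" if "u \<in> ?V1" "v \<in> ?V2" for u v
    using kernels_commute[OF sp that(2,1)] bracket_antisym[of u v] by simp
  have subZ: "subspace ?Z1" "subspace ?Z2" by (simp_all add: bracket_span_def)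
  have "{br C u v | u v. True} \<subseteq> ?Z1 + ?Z2"
  proof
    fix w assume "w \<in> {br C u v | u v. True}"
    then obtain u v where w: "w = br C u v" by blast
    obtain u1 u2 where u: "u1 \<in> ?V1" "u2 \<in> ?V2" "u = u1 + u2"
      using compV by (rule complementary_decomp)
    obtain v1 v2 where v: "v1 \<in> ?V1" "v2 \<in> ?V2" "v = v1 + v2"
      using compV by (rule complementary_decomp)
    have "w = br C u1 v1 + br C u2 v2"
      using u v cross[of u1 v2] cross[of v1 u2] by (simp add: w br_add_left br_add_right)
    moreover have "br C u1 v1 \<in> ?Z1" "br C u2 v2 \<in> ?Z2"
      using u v by (auto simp: bracket_span_def intro: span_base)
    ultimately show "w \<in> ?Z1 + ?Z2" by (simp add: set_plus_intro)
  qed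
  then have "span {br C u v | u v. True} \<subseteq> ?Z1 + ?Z2"
    by (rule span_minimal[OF _ subspace_set_plus[OF subZ]])
  then have "complementary ?Z1 ?Z2"
    using bracket_spans_disjoint[OF sp] span_brackets by (auto simp: complementary_def)
  then show "bracket_split C ?V1 ?V2 ?Z1 ?Z2"
    using compV cross subZ subspace_common_kernel
    by (auto simp: bracket_split_def bracket_span_def intro: span_base)
  have "0 \<notin> set As" "0 \<notin> set Bs" using ind dependent_zero by auto
  then show "?V1 \<noteq> {0}" "?V2 \<noteq> {0}"
    using common_kernel_nonzero[OF neA _ compV] common_kernel_nonzero[OF neB _ complementary_sym[OF compV]]
    by blast+
qed

theorem decomposable_iff_splitting_basis:
  "decomposable C \<longleftrightarrow> (\<exists>As Bs. splitting_basis C As Bs)"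
proof
  assume "decomposable C"
  then obtain V1 V2 Z1 Z2 where split: "bracket_split C V1 V2 Z1 Z2" and "V1 \<noteq> {0}" "V2 \<noteq> {0}"
    by (rule split_of_decomposable)
  then have "Z1 \<noteq> {0}" "Z2 \<noteq> {0}"
    using split_center_nonzero[OF split] split_center_nonzero[OF bracket_split_sym[OF split]] by blast+
  then show "\<exists>As Bs. splitting_basis C As Bs" by (rule matrices_of_split[OF split])
next
  assume "\<exists>As Bs. splitting_basis C As Bs"
  then obtain As Bs where basis: "splitting_basis C As Bs" by blast
  show "decomposable C" by (rule decomposable_of_split[OF split_of_matrices[OF basis]])
qed

end

theorem mainTheorem9:
  fixes C :: "'p::finite \<Rightarrow> real^'q::finite^'q"
  assumes skew: "\<And>k. transpose (C k) = - C k"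
    and derived: "derived_alg C = {0} \<times> UNIV"
    and center: "center_alg C = {0} \<times> UNIV"
  shows "decomposable C \<longleftrightarrow>
    (\<exists>As Bs :: (real^'q^'q) list.
        As \<noteq> [] \<and> Bs \<noteq> [] \<and> distinct (As @ Bs) \<and> independent (set (As @ Bs))
      \<and> span (set (As @ Bs)) = span (range C)
      \<and> (let V2 = (\<Inter>A\<in>set As. mker A); V1 = (\<Inter>B\<in>set Bs. mker B)
         in V1 \<inter> V2 = {0} \<and> {a + b | a b. a \<in> V1 \<and> b \<in> V2} = UNIV))"
proof -
  interpret nilpotent_center C by unfold_locales (fact skew derived center)+
  show ?thesis
    unfolding decomposable_iff_splitting_basis splitting_basis_def complementary_def
      common_kernel_def set_plus_eq_sums Let_def ..
qed

end
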